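(* A (Hausdorff, real) topological vector space $E$ contains a linear subspace topologically isomorphic to $\mathbb{R}^{\mathbb{N}}$ if and only if $E$ contains a non-trivial $\mathbb{R}^{\mathbb{N}}$-convergent sequence.
   Context: $\mathbb{R}^{\mathbb{N}}$ carries the Tychonoff product topology. A sequence $\{a_n:n\in\mathbb{N}\}$ in $E$ is $\mathbb{R}^{\mathbb{N}}$-convergent if for every real sequence $\{r_n:n\in\mathbb{N}\}$ the series $\sum_{n}r_na_n$ converges in $E$ (i.e. its partial sums converge to some element of $E$). Such a sequence is non-trivial if $a_n\neq 0$ for infinitely many $n$. *)

theory Defs
  imports "HOL-Analysis.Analysis"
begin

text \<open>A real topological vector space: vector addition and scalar multiplication are
  continuous (product topologies). Hausdorffness is imposed via the class t2_space.\<close>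
definition is_tvs :: "'a::{real_vector, topological_space} itself \<Rightarrow> bool" where
  "is_tvs _ \<longleftrightarrow>
     continuous_on UNIV (\<lambda>p::'a \<times> 'a. fst p + snd p) \<and>
     continuous_on UNIV (\<lambda>p::real \<times> 'a. fst p *\<^sub>R snd p)"

text \<open>R^N is modelled as nat => real with the Tychonoff product topology (the library's
  topology on function spaces) and pointwise vector operations.\<close>
definition contains_RN :: "'a::{real_vector, topological_space} itself \<Rightarrow> bool" where
  "contains_RN _ \<longleftrightarrow>
     (\<exists>(L::'a set) (T::(nat \<Rightarrow> real) \<Rightarrow> 'a).
        subspace L \<and>
        (\<forall>f g. T (\<lambda>n. f n + g n) = T f + T g) \<and>
        (\<forall>c f. T (\<lambda>n. c * f n) = c *\<^sub>R T f) \<and>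
        homeomorphic_map (euclidean :: (nat \<Rightarrow> real) topology) (top_of_set L) T)"

definition RN_convergent :: "(nat \<Rightarrow> 'a::{real_vector, topological_space}) \<Rightarrow> bool" where
  "RN_convergent a \<longleftrightarrow> (\<forall>r::nat \<Rightarrow> real. summable (\<lambda>n. r n *\<^sub>R a n))"

definition nontrivial_seq :: "(nat \<Rightarrow> 'a::zero) \<Rightarrow> bool" where
  "nontrivial_seq a \<longleftrightarrow> infinite {n. a n \<noteq> 0}"

end

theory Submission
  imports Defs
begin

text \<open>If a linear homeomorphism T maps \<open>\<real>\<^sup>\<nat>\<close> into E, the images of the unit vectors form a
  non-trivial \<open>\<real>\<^sup>\<nat>\<close>-convergent sequence, since finitely supported truncations converge in the
  product topology.

  Conversely, let a be non-trivial and \<open>\<real>\<^sup>\<nat>\<close>-convergent. A block argument shows that the spans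
  of the tails \<open>a\<^sub>n, a\<^sub>n\<^sub>+\<^sub>1, \<dots>\<close> eventually lie in every neighbourhood of 0, so the closures
  \<open>M\<^sub>n\<close> of these spans intersect in {0}. Hence \<open>a\<^sub>n \<notin> M\<^sub>n\<^sub>+\<^sub>1\<close> for infinitely many n, and
  along these indices we get a subsequence b for which \<open>r \<mapsto> \<Sum> r\<^sub>k b\<^sub>k\<close> is linear and
  continuous (its tails are uniformly small), and injective with continuous inverse: the
  coefficient \<open>r\<^sub>k\<close> is read off continuously, because \<open>b\<^sub>k\<close> lies outside the closed subspace
  that contains all later terms.\<close>

section \<open>Topological vector spaces\<close>

lemma tvs_tendsto_add:
  assumes tvs: "is_tvs TYPE('a::{real_vector,topological_space})"
    and "(f \<longlongrightarrow> (x::'a)) F" "(g \<longlongrightarrow> y) F"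
  shows "((\<lambda>t. f t + g t) \<longlongrightarrow> x + y) F"
proof -
  have "continuous_on UNIV (\<lambda>p::'a \<times> 'a. fst p + snd p)" using tvs by (simp add: is_tvs_def)
  from continuous_on_tendsto_compose[OF this tendsto_Pair[OF assms(2,3)]] show ?thesis by simp
qed

lemma tvs_tendsto_scaleR:
  assumes tvs: "is_tvs TYPE('a::{real_vector,topological_space})"
    and "(c \<longlongrightarrow> (s::real)) F" "(g \<longlongrightarrow> (y::'a)) F"
  shows "((\<lambda>t. c t *\<^sub>R g t) \<longlongrightarrow> s *\<^sub>R y) F"
proof -
  have "continuous_on UNIV (\<lambda>p::real \<times> 'a. fst p *\<^sub>R snd p)" using tvs by (simp add: is_tvs_def)
  from continuous_on_tendsto_compose[OF this tendsto_Pair[OF assms(2,3)]] show ?thesis by simp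
qed

lemma tvs_tendsto_diff:
  assumes tvs: "is_tvs TYPE('a::{real_vector,topological_space})"
    and "(f \<longlongrightarrow> (x::'a)) F" "(g \<longlongrightarrow> y) F"
  shows "((\<lambda>t. f t - g t) \<longlongrightarrow> x - y) F"
  using tvs_tendsto_add[OF tvs assms(2) tvs_tendsto_scaleR[OF tvs tendsto_const[of "-1"] assms(3)]]
  by simp

lemma tvs_tendsto_sum:
  assumes tvs: "is_tvs TYPE('a::{real_vector,topological_space})"
    and "\<And>i. i \<in> I \<Longrightarrow> (f i \<longlongrightarrow> (x i::'a)) F"
  shows "((\<lambda>t. \<Sum>i\<in>I. f i t) \<longlongrightarrow> (\<Sum>i\<in>I. x i)) F"
  using assms(2)
  by (induction I rule: infinite_finite_induct) (auto intro: tvs_tendsto_add[OF tvs])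

lemma tvs_continuous_on_affine:
  assumes tvs: "is_tvs TYPE('a::{real_vector,topological_space})"
  shows "continuous_on UNIV (\<lambda>y::'a. c *\<^sub>R y + z)"
  unfolding continuous_on_def
  by (auto intro!: tvs_tendsto_add[OF tvs] tvs_tendsto_scaleR[OF tvs] tendsto_ident_at)

lemma tvs_open_affine_vimage:
  assumes tvs: "is_tvs TYPE('a::{real_vector,topological_space})" and "open (U::'a set)"
  shows "open {y. c *\<^sub>R y + z \<in> U}"
  using open_vimage[OF assms(2) tvs_continuous_on_affine[OF tvs]] by (simp add: vimage_def)

lemma tvs_nhds_0_add:
  assumes tvs: "is_tvs TYPE('a::{real_vector,topological_space})"
    and "open (W::'a set)" "0 \<in> W"
  obtains V where "open V" "0 \<in> V" "\<And>u v. u \<in> V \<Longrightarrow> v \<in> V \<Longrightarrow> u + v \<in> W"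
proof -
  let ?add = "\<lambda>p::'a \<times> 'a. fst p + snd p"
  have "open (?add -` W)"
    using tvs assms(2) by (intro open_vimage) (simp_all add: is_tvs_def)
  moreover have "(0, 0) \<in> ?add -` W"
    using assms(3) by simp
  ultimately obtain P Q where PQ: "open P" "open Q" "(0, 0) \<in> P \<times> Q" and PQ_W: "P \<times> Q \<subseteq> ?add -` W"
    by (rule open_prod_elim)
  show ?thesis
  proof (rule that[of "P \<inter> Q"])
    fix u v assume "u \<in> P \<inter> Q" "v \<in> P \<inter> Q"
    then have "(u, v) \<in> P \<times> Q" by simp
    with PQ_W show "u + v \<in> W" by auto
  qed (use PQ in auto)
qed

lemma tvs_nhds_0_closure_subset:
  assumes tvs: "is_tvs TYPE('a::{real_vector,topological_space})"
    and "open (W::'a set)" "0 \<in> W"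
  obtains V where "open V" "0 \<in> V" "closure V \<subseteq> W"
proof -
  obtain V where V: "open V" "0 \<in> V" and VW: "\<And>u v. u \<in> V \<Longrightarrow> v \<in> V \<Longrightarrow> u + v \<in> W"
    using tvs_nhds_0_add[OF assms] by blast
  have "x \<in> W" if x: "x \<in> closure V" for x
  proof -
    have "open {y. (-1) *\<^sub>R y + x \<in> V}"
      by (rule tvs_open_affine_vimage[OF tvs V(1)])
    moreover have "x \<in> {y. (-1) *\<^sub>R y + x \<in> V}"
      using V by simp
    ultimately obtain v where "v \<in> V" "(-1) *\<^sub>R v + x \<in> V"
      using x unfolding closure_iff_nhds_not_empty by blast
    then show "x \<in> W" using VW[of v "(-1) *\<^sub>R v + x"] by simp
  qed
  with V show ?thesis using that by blast
qed

lemma tvs_subspace_closure: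
  assumes tvs: "is_tvs TYPE('a::{real_vector,topological_space})" and S: "subspace (S::'a set)"
  shows "subspace (closure S)"
proof (rule subspaceI)
  show "0 \<in> closure S" using subspace_0[OF S] closure_subset by blast
next
  let ?add = "\<lambda>p::'a \<times> 'a. fst p + snd p"
  fix x y assume "x \<in> closure S" "y \<in> closure S"
  then have "(x, y) \<in> closure (S \<times> S)" by (simp add: closure_Times)
  moreover have "?add ` closure (S \<times> S) \<subseteq> closure S"
    using tvs subspace_add[OF S] closure_subset[of S]
    by (intro image_closure_subset) (auto simp: is_tvs_def intro: continuous_on_subset)
  ultimately show "x + y \<in> closure S" by force
next
  fix c :: real and x assume "x \<in> closure S"
  moreover have "(\<lambda>y. c *\<^sub>R y + 0) ` closure S \<subseteq> closure S"
    using subspace_scale[OF S] closure_subset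
    by (intro image_closure_subset continuous_on_subset[OF tvs_continuous_on_affine[OF tvs]]) auto
  ultimately show "c *\<^sub>R x \<in> closure S" by force
qed

section \<open>Tails of \<open>\<real>\<^sup>\<nat>\<close>-convergent sequences\<close>

lemma span_image_obtain_sum:
  assumes "y \<in> span (a ` I)"
  obtains F c where "finite F" "F \<subseteq> I" "y = (\<Sum>i\<in>F. c i *\<^sub>R a i)"
proof -
  obtain t r where t: "finite t" "t \<subseteq> a ` I" and y: "y = (\<Sum>v\<in>t. r v *\<^sub>R v)"
    using assms unfolding span_explicit by blast
  then obtain F where F: "F \<subseteq> I" "inj_on a F" "t = a ` F"
    by (meson subset_image_inj)
  with t y show ?thesis
    by (intro that[of F "\<lambda>i. r (a i)"]) (auto simp: finite_image_iff sum.reindex)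
qed

lemma strict_mono_Least_block:
  assumes B: "strict_mono (B::nat \<Rightarrow> nat)" and i: "B k \<le> i" "i < B (Suc k)"
  shows "(LEAST k. i < B (Suc k)) = k"
proof (rule Least_equality)
  fix k' assume i': "i < B (Suc k')"
  show "k \<le> k'"
  proof (rule ccontr)
    assume "\<not> k \<le> k'"
    then have "B (Suc k') \<le> B k" using strict_mono_less_eq[OF B] by simp
    with i i' show False by simp
  qed
qed (fact i(2))

lemma obtain_separating_blocks:
  assumes G: "\<And>N. finite (G N)" "\<And>N. G N \<subseteq> {N..}"
  obtains B :: "nat \<Rightarrow> nat" where "strict_mono B" "\<And>k. G (B k) \<subseteq> {B k..<B (Suc k)}"
proof -
  define next_start where "next_start N = Suc (Max (insert N (G N)))" for N
  have G_next: "G N \<subseteq> {N..<next_start N}" for N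
  proof
    fix x assume x: "x \<in> G N"
    then have "x \<le> Max (insert N (G N))" using G(1) by simp
    with x G(2) show "x \<in> {N..<next_start N}" by (auto simp: next_start_def)
  qed
  define B where "B k = (next_start ^^ k) 0" for k
  have B_Suc: "B (Suc k) = next_start (B k)" for k
    by (simp add: B_def)
  have "N < next_start N" for N
    using G(1)[of N] by (simp add: next_start_def le_imp_less_Suc)
  then have "strict_mono B"
    by (simp add: strict_mono_Suc_iff B_Suc)
  moreover have "G (B k) \<subseteq> {B k..<B (Suc k)}" for k
    using G_next[of "B k"] by (simp add: B_Suc)
  ultimately show ?thesis
    by (rule that)
qed

lemma RN_convergent_block_sums_tendsto_0:
  assumes tvs: "is_tvs TYPE('a::{real_vector,topological_space})"
    and "RN_convergent (a::nat \<Rightarrow> 'a)" and B: "strict_mono B"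
  shows "((\<lambda>k. \<Sum>i\<in>{B k..<B (Suc k)}. d i *\<^sub>R a i) \<longlongrightarrow> 0) sequentially"
proof -
  define P where "P n = (\<Sum>i<n. d i *\<^sub>R a i)" for n
  obtain s where P: "P \<longlonglongrightarrow> s"
    using assms(2) unfolding RN_convergent_def summable_def sums_def P_def by blast
  have "strict_mono (\<lambda>k. B (Suc k))"
    using B by (simp add: strict_mono_def)
  from LIMSEQ_subseq_LIMSEQ[OF P this] LIMSEQ_subseq_LIMSEQ[OF P B]
  have "((\<lambda>k. P (B (Suc k)) - P (B k)) \<longlongrightarrow> s - s) sequentially"
    unfolding o_def by (rule tvs_tendsto_diff[OF tvs])
  moreover have "P (B (Suc k)) = P (B k) + (\<Sum>i\<in>{B k..<B (Suc k)}. d i *\<^sub>R a i)" for k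
    unfolding P_def atLeast0LessThan[symmetric]
    by (rule sum.atLeastLessThan_concat[symmetric]) (simp_all add: strict_mono_less_eq[OF B])
  ultimately show ?thesis by simp
qed

text \<open>If the claim failed, finite combinations outside U could be chosen in consecutive disjoint
  blocks of indices; combining them into one coefficient sequence would give a convergent series
  whose block sums do not tend to 0.\<close>
lemma RN_convergent_span_tail_subset:
  assumes tvs: "is_tvs TYPE('a::{real_vector,topological_space})"
    and a: "RN_convergent (a::nat \<Rightarrow> 'a)" and U: "open U" "0 \<in> U"
  shows "\<exists>N. span (a ` {N..}) \<subseteq> U"
proof (rule ccontr)
  assume "\<nexists>N. span (a ` {N..}) \<subseteq> U"
  have "\<exists>G c. finite G \<and> G \<subseteq> {N..} \<and> (\<Sum>i\<in>G. c i *\<^sub>R a i) \<notin> U" for N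
  proof -
    from \<open>\<nexists>N. span (a ` {N..}) \<subseteq> U\<close> obtain y where "y \<in> span (a ` {N..})" "y \<notin> U"
      by blast
    then show ?thesis
      by (metis span_image_obtain_sum)
  qed
  then obtain G c where "\<forall>N. finite (G N) \<and> G N \<subseteq> {N..} \<and> (\<Sum>i\<in>G N. c N i *\<^sub>R a i) \<notin> U"
    by metis
  then have G: "\<And>N. finite (G N)" "\<And>N. G N \<subseteq> {N..}"
    and notin: "\<And>N. (\<Sum>i\<in>G N. c N i *\<^sub>R a i) \<notin> U"
    by blast+
  obtain B where B: "strict_mono B" and GB: "\<And>k. G (B k) \<subseteq> {B k..<B (Suc k)}"
    using obtain_separating_blocks[OF G] by blast
  define block where "block i = (LEAST k. i < B (Suc k))" for i
  define d where "d i = (if i \<in> G (B (block i)) then c (B (block i)) i else 0)" for i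
  have "(\<Sum>i\<in>{B k..<B (Suc k)}. d i *\<^sub>R a i) = (\<Sum>i\<in>G (B k). c (B k) i *\<^sub>R a i)" for k
  proof -
    have "(\<Sum>i\<in>{B k..<B (Suc k)}. d i *\<^sub>R a i)
        = (\<Sum>i\<in>{B k..<B (Suc k)}. if i \<in> G (B k) then c (B k) i *\<^sub>R a i else 0)"
      by (rule sum.cong) (auto simp: d_def block_def strict_mono_Least_block[OF B])
    also have "\<dots> = (\<Sum>i\<in>G (B k). c (B k) i *\<^sub>R a i)"
      using GB[of k] by (simp add: sum.inter_restrict[symmetric] Int_absorb1)
    finally show ?thesis .
  qed
  moreover have "eventually (\<lambda>k. (\<Sum>i\<in>{B k..<B (Suc k)}. d i *\<^sub>R a i) \<in> U) sequentially"
    using topological_tendstoD[OF RN_convergent_block_sums_tendsto_0[OF tvs a B] U] .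
  then obtain k where "(\<Sum>i\<in>{B k..<B (Suc k)}. d i *\<^sub>R a i) \<in> U"
    unfolding eventually_sequentially by blast
  ultimately show False
    using notin by metis
qed

lemma tvs_coefficient_small_near_0:
  assumes tvs: "is_tvs TYPE('a::{real_vector,topological_space})"
    and C: "subspace (C::'a set)" "closed C" and x: "x \<notin> C" and \<epsilon>: "\<epsilon> > 0"
  obtains U where "open U" "0 \<in> U" "\<And>t c. c \<in> C \<Longrightarrow> t *\<^sub>R x + c \<in> U \<Longrightarrow> \<bar>t\<bar> < \<epsilon>"
proof -
  let ?scale = "\<lambda>p::real \<times> 'a. fst p *\<^sub>R snd p"
  define W where "W = {y. y - x \<notin> C}"
  have "open W"
    using tvs_open_affine_vimage[OF tvs open_Compl[OF C(2)], of 1 "-x"] by (simp add: W_def)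
  then have "open (?scale -` W)"
    using tvs by (intro open_vimage) (auto simp: is_tvs_def)
  moreover have "(0, 0) \<in> ?scale -` W"
    using x subspace_neg[OF C(1), of "-x"] by (auto simp: W_def)
  ultimately obtain P Q where PQ: "open P" "open Q" "(0, 0) \<in> P \<times> Q" "P \<times> Q \<subseteq> ?scale -` W"
    by (rule open_prod_elim)
  obtain \<delta> where \<delta>: "\<delta> > 0" "ball 0 \<delta> \<subseteq> P"
    using PQ(1,3) by (meson mem_Sigma_iff openE)
  define \<kappa> where "\<kappa> = \<delta> * \<epsilon> / 2"
  have \<kappa>: "\<kappa> > 0"
    using \<delta> \<epsilon> by (simp add: \<kappa>_def)
  define U where "U = {y. (1 / \<kappa>) *\<^sub>R y + 0 \<in> Q}"
  show ?thesis
  proof (rule that[of U])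
    show "open U"
      unfolding U_def by (rule tvs_open_affine_vimage[OF tvs PQ(2)])
    show "0 \<in> U"
      using PQ(3) by (simp add: U_def)
    fix t c assume c: "c \<in> C" and tc: "t *\<^sub>R x + c \<in> U"
    show "\<bar>t\<bar> < \<epsilon>"
    proof (rule ccontr)
      assume "\<not> \<bar>t\<bar> < \<epsilon>"
      then have t: "\<bar>t\<bar> \<ge> \<epsilon>" "t \<noteq> 0" using \<epsilon> by auto
      \<comment> \<open>rescaling by \<open>\<kappa> / t\<close> moves the point of U into W, off \<open>x + C\<close>\<close>
      have "\<bar>\<kappa> / t\<bar> = \<kappa> / \<bar>t\<bar>"
        using \<kappa> by simp
      also have "\<dots> \<le> \<kappa> / \<epsilon>"
        using \<kappa> \<epsilon> t(1) by (simp add: frac_le)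
      also have "\<dots> = \<delta> / 2"
        using \<epsilon> by (simp add: \<kappa>_def)
      finally have "\<bar>\<kappa> / t\<bar> < \<delta>"
        using \<delta>(1) by linarith
      then have "\<kappa> / t \<in> P"
        by (intro subsetD[OF \<delta>(2)]) (simp add: dist_norm)
      moreover have "(1 / \<kappa>) *\<^sub>R (t *\<^sub>R x + c) \<in> Q"
        using tc by (simp add: U_def)
      ultimately have "(\<kappa> / t) *\<^sub>R ((1 / \<kappa>) *\<^sub>R (t *\<^sub>R x + c)) \<in> W"
        using PQ(4) by auto
      also have "(\<kappa> / t) *\<^sub>R ((1 / \<kappa>) *\<^sub>R (t *\<^sub>R x + c)) = x + (1 / t) *\<^sub>R c"
        using \<kappa> t(2) by (simp add: scaleR_add_right)
      finally have "(1 / t) *\<^sub>R c \<notin> C"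
        by (simp add: W_def)
      with subspace_scale[OF C(1) c] show False by blast
    qed
  qed
qed

section \<open>A copy of \<open>\<real>\<^sup>\<nat>\<close> spanned by a subsequence\<close>

lemma tendsto_fun_iff:
  fixes f :: "'c \<Rightarrow> 'i \<Rightarrow> 'b::topological_space"
  shows "(f \<longlongrightarrow> l) F \<longleftrightarrow> (\<forall>i. ((\<lambda>t. f t i) \<longlongrightarrow> l i) F)"
  using limitin_componentwise[of "\<lambda>i. euclidean" UNIV f l F]
  by (simp add: euclidean_product_topology)

locale nontrivial_RN_convergent =
  fixes a :: "nat \<Rightarrow> 'a::{real_vector,t2_space}"
  assumes tvs: "is_tvs TYPE('a)"
    and a_RN_convergent: "RN_convergent a"
    and a_nontrivial: "nontrivial_seq a"
begin

definition tail_space :: "nat \<Rightarrow> 'a set" where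
  "tail_space n = closure (span (a ` {n..}))"

lemma subspace_tail_space: "subspace (tail_space n)"
  unfolding tail_space_def by (rule tvs_subspace_closure[OF tvs subspace_span])

lemma closed_tail_space: "closed (tail_space n)"
  unfolding tail_space_def by simp

lemma tail_space_antimono: "n \<le> m \<Longrightarrow> tail_space m \<subseteq> tail_space n"
  unfolding tail_space_def by (intro closure_mono span_mono image_mono) simp

lemma in_tail_space:
  assumes "n \<le> m"
  shows "a m \<in> tail_space n"
proof -
  have "a m \<in> span (a ` {n..})"
    using assms by (intro span_base) simp
  then show ?thesis
    unfolding tail_space_def using closure_subset by blast
qed

lemma tail_space_subset_nhds_0:
  assumes "open U" "0 \<in> U"
  obtains N where "tail_space N \<subseteq> U"
proof -
  obtain V where V: "open V" "0 \<in> V" "closure V \<subseteq> U"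
    using tvs_nhds_0_closure_subset[OF tvs assms] .
  obtain N where "span (a ` {N..}) \<subseteq> V"
    using RN_convergent_span_tail_subset[OF tvs a_RN_convergent V(1,2)] by blast
  then have "tail_space N \<subseteq> U"
    unfolding tail_space_def using closure_mono V(3) by blast
  then show ?thesis by (rule that)
qed

lemma Inter_tail_space:
  assumes "\<And>n. x \<in> tail_space n"
  shows "x = 0"
proof (rule ccontr)
  assume "x \<noteq> 0"
  then obtain U where U: "open U" "0 \<in> U" "x \<notin> U"
    by (metis separation_t1)
  obtain N where "tail_space N \<subseteq> U"
    using tail_space_subset_nhds_0[OF U(1,2)] .
  with assms[of N] U(3) show False
    by blast
qed

lemma tail_space_subset_Suc:
  assumes "a n \<in> tail_space (Suc n)"
  shows "tail_space n \<subseteq> tail_space (Suc n)"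
proof -
  have "a m \<in> tail_space (Suc n)" if "n \<le> m" for m
    using assms in_tail_space[of "Suc n" m] that by (cases "m = n") auto
  then have "a ` {n..} \<subseteq> tail_space (Suc n)"
    by auto
  then have "span (a ` {n..}) \<subseteq> tail_space (Suc n)"
    by (rule span_minimal[OF _ subspace_tail_space])
  then show ?thesis
    unfolding tail_space_def[of n] by (rule closure_minimal[OF _ closed_tail_space])
qed

definition jumps :: "nat set" where
  "jumps = {n. a n \<notin> tail_space (Suc n)}"

lemma infinite_jumps: "infinite jumps"
proof
  assume "finite jumps"
  then obtain M where M: "\<forall>n\<in>jumps. n \<le> M"
    using finite_nat_set_iff_bounded_le by blast
  define N where "N = Suc M"
  have N: "a n \<in> tail_space (Suc n)" if "N \<le> n" for n
    using M that by (auto simp: jumps_def N_def)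
  have up: "tail_space N \<subseteq> tail_space n" if "N \<le> n" for n
    using that
  proof (induction n rule: dec_induct)
    case (step n)
    then show ?case using tail_space_subset_Suc[OF N[of n]] by blast
  qed simp
  have zero: "a m = 0" if "N \<le> m" for m
  proof (rule Inter_tail_space)
    fix n
    have "a m \<in> tail_space N" using in_tail_space that .
    moreover have "tail_space N \<subseteq> tail_space n"
      using up[of n] tail_space_antimono[of n N] by (cases "N \<le> n") auto
    ultimately show "a m \<in> tail_space n" by blast
  qed
  have "{n. a n \<noteq> 0} \<subseteq> {..<N}"
  proof
    fix n assume "n \<in> {n. a n \<noteq> 0}"
    with zero show "n \<in> {..<N}" by (meson lessThan_iff mem_Collect_eq not_le)
  qed
  with a_nontrivial show False
    unfolding nontrivial_seq_def by (meson finite_lessThan finite_subset)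
qed

definition sel :: "nat \<Rightarrow> nat" where
  "sel = enumerate jumps"

definition b :: "nat \<Rightarrow> 'a" where
  "b k = a (sel k)"

lemma strict_mono_sel: "strict_mono sel"
  unfolding sel_def by (rule strict_mono_enumerate[OF infinite_jumps])

lemma b_notin_tail_space: "b k \<notin> tail_space (Suc (sel k))"
proof -
  have "sel k \<in> jumps"
    unfolding sel_def by (rule enumerate_in_set[OF infinite_jumps])
  then show ?thesis
    by (simp add: jumps_def b_def)
qed

lemma b_in_tail_space:
  assumes "k < j"
  shows "b j \<in> tail_space (Suc (sel k))"
proof -
  have "sel k < sel j"
    using strict_mono_sel assms by (rule strict_monoD)
  then show ?thesis
    unfolding b_def by (intro in_tail_space) simp
qed

lemma summable_b: "summable (\<lambda>k. r k *\<^sub>R b k)"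
proof -
  define c where "c i = (if i \<in> range sel then r (inv sel i) else 0)" for i
  have inj: "inj sel"
    using strict_mono_sel strict_mono_imp_inj_on by blast
  obtain s where "(\<lambda>i. c i *\<^sub>R a i) sums s"
    using a_RN_convergent unfolding RN_convergent_def summable_def by blast
  then have "(\<lambda>k. c (sel k) *\<^sub>R a (sel k)) sums s"
    by (subst sums_mono_reindex[OF strict_mono_sel]) (auto simp: c_def)
  then show ?thesis
    using inj by (auto simp: summable_def c_def b_def)
qed

definition embed :: "(nat \<Rightarrow> real) \<Rightarrow> 'a" where
  "embed r = (\<Sum>k. r k *\<^sub>R b k)"

lemma embed_sums: "(\<lambda>k. r k *\<^sub>R b k) sums embed r"
  unfolding embed_def using summable_b by (rule summable_sums)

lemma embed_add: "embed (\<lambda>n. f n + g n) = embed f + embed g"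
proof -
  have "(\<lambda>n. (\<Sum>k<n. f k *\<^sub>R b k) + (\<Sum>k<n. g k *\<^sub>R b k)) \<longlonglongrightarrow> embed f + embed g"
    using embed_sums[of f] embed_sums[of g] unfolding sums_def by (rule tvs_tendsto_add[OF tvs])
  then have "(\<lambda>k. (f k + g k) *\<^sub>R b k) sums (embed f + embed g)"
    by (simp add: sums_def scaleR_add_left sum.distrib)
  then show ?thesis
    by (simp add: sums_unique[symmetric] embed_def)
qed

lemma embed_scaleR: "embed (\<lambda>n. c * f n) = c *\<^sub>R embed f"
proof -
  have "(\<lambda>n. c *\<^sub>R (\<Sum>k<n. f k *\<^sub>R b k)) \<longlonglongrightarrow> c *\<^sub>R embed f"
    using tendsto_const embed_sums[of f] unfolding sums_def by (rule tvs_tendsto_scaleR[OF tvs])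
  then have "(\<lambda>k. (c * f k) *\<^sub>R b k) sums (c *\<^sub>R embed f)"
    by (simp add: sums_def scaleR_sum_right)
  then show ?thesis
    by (simp add: sums_unique[symmetric] embed_def)
qed

lemma embed_diff: "embed (\<lambda>n. f n - g n) = embed f - embed g"
  using embed_add[of f "\<lambda>n. (-1) * g n"] embed_scaleR[of "-1" g] by simp

lemma embed_remainder_in_tail_space:
  "embed r - (\<Sum>j<Suc k. r j *\<^sub>R b j) \<in> tail_space (Suc (sel k))"
proof -
  define P where "P n = (\<Sum>j<n. r j *\<^sub>R b j)" for n
  have "(\<lambda>n. P n - P (Suc k)) \<longlonglongrightarrow> embed r - P (Suc k)"
    using embed_sums[of r] tendsto_const unfolding sums_def P_def by (rule tvs_tendsto_diff[OF tvs])
  moreover have "P n - P (Suc k) \<in> tail_space (Suc (sel k))" if "Suc k \<le> n" for n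
  proof -
    have "P n - P (Suc k) = (\<Sum>j\<in>{Suc k..<n}. r j *\<^sub>R b j)"
      unfolding P_def atLeast0LessThan[symmetric] by (rule sum_diff_nat_ivl) (use that in simp_all)
    also have "\<dots> \<in> tail_space (Suc (sel k))"
      by (intro subspace_sum[OF subspace_tail_space] subspace_scale[OF subspace_tail_space]
          b_in_tail_space) simp
    finally show ?thesis .
  qed
  then have "eventually (\<lambda>n. P n - P (Suc k) \<in> tail_space (Suc (sel k))) sequentially"
    unfolding eventually_sequentially by blast
  ultimately show ?thesis
    unfolding P_def by (intro Lim_in_closed_set[OF closed_tail_space]) simp_all
qed

lemma coefficient_tendsto_0:
  assumes "((\<lambda>t. embed (q t)) \<longlongrightarrow> 0) F"
  shows "((\<lambda>t. q t k) \<longlongrightarrow> 0) F"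
proof (induction k rule: less_induct)
  case (less k)
  define w where "w t = embed (q t) - (\<Sum>j<k. q t j *\<^sub>R b j)" for t
  have "(w \<longlongrightarrow> 0 - (\<Sum>j<k. 0 *\<^sub>R b j)) F"
    unfolding w_def
    by (intro tvs_tendsto_diff[OF tvs assms] tvs_tendsto_sum[OF tvs] tvs_tendsto_scaleR[OF tvs]
        less tendsto_const) simp
  then have w: "(w \<longlongrightarrow> 0) F"
    by simp
  have w_in: "w t - q t k *\<^sub>R b k \<in> tail_space (Suc (sel k))" for t
    using embed_remainder_in_tail_space[of "q t" k] by (simp add: w_def algebra_simps)
  show ?case
  proof (rule tendstoI)
    fix \<epsilon> :: real assume "\<epsilon> > 0"
    with tvs_coefficient_small_near_0[OF tvs subspace_tail_space closed_tail_space b_notin_tail_space]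
    obtain U where U: "open U" "0 \<in> U"
      and small: "\<And>t c. c \<in> tail_space (Suc (sel k)) \<Longrightarrow> t *\<^sub>R b k + c \<in> U \<Longrightarrow> \<bar>t\<bar> < \<epsilon>"
      by metis
    have "eventually (\<lambda>t. w t \<in> U) F"
      using topological_tendstoD[OF w U] .
    then show "eventually (\<lambda>t. dist (q t k) 0 < \<epsilon>) F"
    proof (rule eventually_mono)
      fix t assume "w t \<in> U"
      then have "q t k *\<^sub>R b k + (w t - q t k *\<^sub>R b k) \<in> U"
        by simp
      then have "\<bar>q t k\<bar> < \<epsilon>"
        by (rule small[OF w_in])
      then show "dist (q t k) 0 < \<epsilon>"
        by simp
    qed
  qed
qed

lemma inj_embed: "inj embed"
proof (rule injI)
  fix r r' assume "embed r = embed r'"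
  then have "((\<lambda>_::nat. embed (\<lambda>n. r n - r' n)) \<longlongrightarrow> 0) sequentially"
    by (simp add: embed_diff)
  then have "(\<lambda>_::nat. r k - r' k) \<longlonglongrightarrow> 0" for k
    by (rule coefficient_tendsto_0)
  then show "r = r'"
    by (simp add: LIMSEQ_const_iff fun_eq_iff)
qed

lemma embed_tendsto_0:
  assumes \<rho>: "(\<rho> \<longlongrightarrow> (\<lambda>n. 0)) F"
  shows "((\<lambda>t. embed (\<rho> t)) \<longlongrightarrow> 0) F"
proof (rule topological_tendstoI)
  fix W :: "'a set" assume W: "open W" "0 \<in> W"
  obtain V where V: "open V" "0 \<in> V" and VW: "\<And>u v. u \<in> V \<Longrightarrow> v \<in> V \<Longrightarrow> u + v \<in> W"
    using tvs_nhds_0_add[OF tvs W] by blast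
  obtain N where N: "tail_space N \<subseteq> V"
    using tail_space_subset_nhds_0[OF V] .
  have "N \<le> Suc (sel N)"
    using seq_suble[OF strict_mono_sel, of N] by simp
  then have remainder: "embed (\<rho> t) - (\<Sum>j<Suc N. \<rho> t j *\<^sub>R b j) \<in> V" for t
    using embed_remainder_in_tail_space[of "\<rho> t" N] tail_space_antimono N by blast
  have "((\<lambda>t. \<Sum>j<Suc N. \<rho> t j *\<^sub>R b j) \<longlongrightarrow> (\<Sum>j<Suc N. 0 *\<^sub>R b j)) F"
    using \<rho> unfolding tendsto_fun_iff
    by (intro tvs_tendsto_sum[OF tvs] tvs_tendsto_scaleR[OF tvs] tendsto_const) simp
  then have "eventually (\<lambda>t. (\<Sum>j<Suc N. \<rho> t j *\<^sub>R b j) \<in> V) F"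
    using topological_tendstoD V by simp
  then show "eventually (\<lambda>t. embed (\<rho> t) \<in> W) F"
  proof (rule eventually_mono)
    fix t assume "(\<Sum>j<Suc N. \<rho> t j *\<^sub>R b j) \<in> V"
    from VW[OF this remainder[of t]] show "embed (\<rho> t) \<in> W"
      by simp
  qed
qed

lemma continuous_on_embed: "continuous_on UNIV embed"
  unfolding continuous_on_def
proof
  fix r0 :: "nat \<Rightarrow> real"
  have "((\<lambda>r. r n) \<longlongrightarrow> r0 n) (at r0 within UNIV)" for n
    using tendsto_ident_at[of r0 UNIV] unfolding tendsto_fun_iff by blast
  then have "((\<lambda>r. r n - r0 n) \<longlongrightarrow> r0 n - r0 n) (at r0 within UNIV)" for n
    by (rule tendsto_diff) simp
  then have "((\<lambda>r. \<lambda>n. r n - r0 n) \<longlongrightarrow> (\<lambda>n. 0)) (at r0 within UNIV)"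
    unfolding tendsto_fun_iff by simp
  from tvs_tendsto_add[OF tvs embed_tendsto_0[OF this] tendsto_const[of "embed r0"]]
  show "(embed \<longlongrightarrow> embed r0) (at r0 within UNIV)"
    by (simp add: embed_diff)
qed

lemma continuous_on_inv_embed: "continuous_on (range embed) (inv embed)"
  unfolding continuous_on_def
proof
  fix y0 assume y0: "y0 \<in> range embed"
  define q where "q y = (\<lambda>n. inv embed y n - inv embed y0 n)" for y
  have "((\<lambda>y. y - y0) \<longlongrightarrow> y0 - y0) (at y0 within range embed)"
    by (intro tvs_tendsto_diff[OF tvs] tendsto_ident_at tendsto_const)
  moreover have "eventually (\<lambda>y. y - y0 = embed (q y)) (at y0 within range embed)"
    using y0 by (auto simp: eventually_at_filter q_def embed_diff f_inv_into_f)
  ultimately have "((\<lambda>y. embed (q y)) \<longlongrightarrow> 0) (at y0 within range embed)"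
    by (simp add: Lim_transform_eventually)
  then have "((\<lambda>y. q y k + inv embed y0 k) \<longlongrightarrow> 0 + inv embed y0 k) (at y0 within range embed)" for k
    by (intro tendsto_add coefficient_tendsto_0 tendsto_const)
  then show "(inv embed \<longlongrightarrow> inv embed y0) (at y0 within range embed)"
    unfolding tendsto_fun_iff by (simp add: q_def)
qed

theorem contains_RN: "contains_RN TYPE('a)"
  unfolding contains_RN_def
proof (intro exI conjI allI)
  show "subspace (range embed)"
  proof (rule subspaceI)
    show "0 \<in> range embed"
      using embed_scaleR[of 0 "\<lambda>n. 0"] by (metis rangeI scale_zero_left)
    fix x y assume "x \<in> range embed" "y \<in> range embed"
    then obtain f g where "x = embed f" "y = embed g"
      by blast
    then show "x + y \<in> range embed"
      using embed_add[of f g] by (metis rangeI)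
  next
    fix c :: real and x assume "x \<in> range embed"
    then obtain f where "x = embed f"
      by blast
    then show "c *\<^sub>R x \<in> range embed"
      using embed_scaleR[of c f] by (metis rangeI)
  qed
  show "homeomorphic_map euclidean (top_of_set (range embed)) embed"
    unfolding homeomorphic_map_maps homeomorphic_maps_def
    using continuous_on_embed continuous_on_inv_embed inj_embed
    by (intro exI[of _ "inv embed"]) (auto simp: continuous_map_in_subtopology f_inv_into_f)
qed (simp_all add: embed_add embed_scaleR)

end

lemma contains_RN_imp_RN_convergent:
  assumes "contains_RN TYPE('a::{real_vector,topological_space})"
  shows "\<exists>a::nat \<Rightarrow> 'a. nontrivial_seq a \<and> RN_convergent a"
proof -
  obtain L and T :: "(nat \<Rightarrow> real) \<Rightarrow> 'a"
    where T_add: "\<And>f g. T (\<lambda>n. f n + g n) = T f + T g"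
      and T_scaleR: "\<And>c f. T (\<lambda>n. c * f n) = c *\<^sub>R T f"
      and T: "homeomorphic_map (euclidean :: (nat \<Rightarrow> real) topology) (top_of_set L) T"
    using assms unfolding contains_RN_def by blast
  have "inj T"
    using homeomorphic_imp_injective_map[OF T] by simp
  have "continuous_on UNIV T"
    using homeomorphic_imp_continuous_map[OF T] by (simp add: continuous_map_in_subtopology)
  have T_0: "T (\<lambda>n. 0) = 0"
    using T_scaleR[of 0 "\<lambda>n. 0"] by simp
  define e where "e n = (\<lambda>m::nat. if m = n then 1 else (0::real))" for n
  define a where "a n = T (e n)" for n
  have "a n \<noteq> 0" for n
  proof
    assume "a n = 0"
    then have "T (e n) = T (\<lambda>n. 0)"
      using T_0 by (simp add: a_def)
    then have "e n = (\<lambda>n. 0)"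
      using \<open>inj T\<close> by (simp add: inj_eq)
    then show False
      unfolding e_def by (metis zero_neq_one)
  qed
  then have "nontrivial_seq a"
    by (simp add: nontrivial_seq_def)
  moreover have "summable (\<lambda>n. r n *\<^sub>R a n)" for r
  proof -
    define trunc where "trunc N = (\<lambda>m. if m < N then r m else 0)" for N
    have T_trunc: "T (trunc N) = (\<Sum>n<N. r n *\<^sub>R a n)" for N
    proof (induction N)
      case 0
      then show ?case by (simp add: trunc_def T_0)
    next
      case (Suc N)
      have "trunc (Suc N) = (\<lambda>m. trunc N m + r N * e N m)"
        by (auto simp: trunc_def e_def fun_eq_iff less_Suc_eq)
      then show ?case
        using Suc by (simp add: T_add T_scaleR[of "r N" "e N", symmetric] a_def)
    qed
    have "eventually (\<lambda>N. trunc N m = r m) sequentially" for m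
      unfolding trunc_def eventually_sequentially by (intro exI[of _ "Suc m"]) simp
    then have "trunc \<longlonglongrightarrow> r"
      unfolding tendsto_fun_iff by (blast intro: tendsto_eventually)
    with \<open>continuous_on UNIV T\<close> have "(\<lambda>N. T (trunc N)) \<longlonglongrightarrow> T r"
      by (simp add: continuous_on_tendsto_compose)
    then show ?thesis
      unfolding summable_def sums_def T_trunc by blast
  qed
  ultimately show ?thesis
    unfolding RN_convergent_def by blast
qed

theorem theorem11p4:
  assumes "is_tvs TYPE('a::{real_vector, t2_space})"
  shows "contains_RN TYPE('a) \<longleftrightarrow> (\<exists>a::nat \<Rightarrow> 'a. nontrivial_seq a \<and> RN_convergent a)"
proof
  assume "contains_RN TYPE('a)"
  then show "\<exists>a::nat \<Rightarrow> 'a. nontrivial_seq a \<and> RN_convergent a"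
    by (rule contains_RN_imp_RN_convergent)
next
  assume "\<exists>a::nat \<Rightarrow> 'a. nontrivial_seq a \<and> RN_convergent a"
  then obtain a :: "nat \<Rightarrow> 'a" where "nontrivial_seq a" "RN_convergent a"
    by blast
  with assms interpret nontrivial_RN_convergent a
    by unfold_locales
  show "contains_RN TYPE('a)"
    by (rule contains_RN)
qed

end
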